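(* Let $S$ be a finite set of states, $A$ a finite set of action profiles, and $Y$, $Y'$ finite sets of public signals. Let $q(\cdot\mid s)\in\Delta(S)$ for each $s\in S$ be an action-independent state transition, and let $S(s)=\{t\in S: q(t\mid s)>0\}$. Let $f(\cdot\mid s,t,a)\in\Delta(Y)$ and $f'(\cdot\mid s,t,a)\in\Delta(Y')$ for all $(s,t,a)\in S\times S\times A$, and define the monitoring structures $\Pi$ and $\Pi'$ by $$p(t,y\mid s,a)=f(y\mid s,t,a)\,q(t\mid s),\qquad p'(t',y'\mid s,a)=f'(y'\mid s,t',a)\,q(t'\mid s).$$ Suppose that for every $s\in S$ and every $t\in S(s)$ there exists $t'\in S(s)$ such that $f'$ conditional on $(s,t')$ is more WG-informative than $f$ conditional on $(s,t)$. Then $\Pi$ is a weighted garbling of $\Pi'$.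
   Context: Definitions. (i) $f'$ conditional on $(s,t')$ is more WG-informative than $f$ conditional on $(s,t)$ if there exist weights $\gamma^{y'}\ge 0$ and distributions $\phi(\cdot\mid y')\in\Delta(Y)$, for $y'\in Y'$, such that $f(y\mid s,t,a)=\sum_{y'\in Y'}\gamma^{y'}\phi(y\mid y')f'(y'\mid s,t',a)$ for all $y\in Y$ and all $a\in A$. (ii) A monitoring structure $\Pi$, given by $p(t,y\mid s,a)$ (probability that the next state is $t$ and the public signal is $y$ when the current state is $s$ and action profile $a$ is played), is a weighted garbling of $\Pi'$, given by $p'(t',y'\mid s,a)$ on $S\times Y'$, if for every $s\in S$ there exist weights $\gamma_s^{t',y'}\ge 0$ and distributions $\phi_s(\cdot,\cdot\mid t',y')\in\Delta(S\times Y)$, for $(t',y')\in S\times Y'$, such that $p(t,y\mid s,a)=\sum_{(t',y')\in S\times Y'}\gamma_s^{t',y'}\phi_s(t,y\mid t',y')\,p'(t',y'\mid s,a)$ for all $(t,y)\in S\times Y$ and all $a\in A$. *)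

theory Defs
  imports Complex_Main
begin

definition is_dist :: "('x::finite \<Rightarrow> real) \<Rightarrow> bool" where
  "is_dist d \<longleftrightarrow> (\<forall>x. 0 \<le> d x) \<and> (\<Sum>x\<in>UNIV. d x) = 1"

text \<open>Signal distributions are written f s t a y = f(y | s,t,a).
  more_WG_informative f' s t' f s t: f' conditional on (s,t') is more
  WG-informative than f conditional on (s,t).\<close>
definition more_WG_informative ::
  "('s \<Rightarrow> 's \<Rightarrow> 'a \<Rightarrow> 'y'::finite \<Rightarrow> real) \<Rightarrow> 's \<Rightarrow> 's \<Rightarrow>
   ('s \<Rightarrow> 's \<Rightarrow> 'a \<Rightarrow> 'y::finite \<Rightarrow> real) \<Rightarrow> 's \<Rightarrow> 's \<Rightarrow> bool" where
  "more_WG_informative f' s t' f s0 t \<longleftrightarrow>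
     (\<exists>(\<gamma> :: 'y' \<Rightarrow> real) (\<phi> :: 'y' \<Rightarrow> 'y \<Rightarrow> real).
        (\<forall>y'. 0 \<le> \<gamma> y') \<and> (\<forall>y'. is_dist (\<phi> y')) \<and>
        (\<forall>y a. f s0 t a y = (\<Sum>y'\<in>UNIV. \<gamma> y' * \<phi> y' y * f' s t' a y')))"

text \<open>Monitoring structures are written p s a (t,y) = p(t,y | s,a).
  weighted_garbling p p': p is a weighted garbling of p'.\<close>
definition weighted_garbling ::
  "('s::finite \<Rightarrow> 'a \<Rightarrow> 's \<times> 'y::finite \<Rightarrow> real) \<Rightarrow>
   ('s \<Rightarrow> 'a \<Rightarrow> 's \<times> 'y'::finite \<Rightarrow> real) \<Rightarrow> bool" where
  "weighted_garbling p p' \<longleftrightarrow>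
     (\<forall>s. \<exists>(\<gamma> :: 's \<times> 'y' \<Rightarrow> real) (\<phi> :: 's \<times> 'y' \<Rightarrow> 's \<times> 'y \<Rightarrow> real).
        (\<forall>z'. 0 \<le> \<gamma> z') \<and> (\<forall>z'. is_dist (\<phi> z')) \<and>
        (\<forall>z a. p s a z = (\<Sum>z'\<in>UNIV. \<gamma> z' * \<phi> z' z * p' s a z')))"

end

theory Submission
  imports Defs
begin

text \<open>Normalising its rows, any nonnegative kernel w gives a weighted garbling, so it suffices to
  find, state by state, a nonnegative w with p(t,y|s,a) = \<Sum> w((t',y'),(t,y)) p'(t',y'|s,a).
  For q(t|s) > 0 pick a successor \<tau> t with q(\<tau> t|s) > 0 whose f' is more WG-informative than f
  at (s,t) via weights \<gamma>_t and garbling \<phi>_t, and put weight \<gamma>_t(y') \<phi>_t(y|y') q(t|s)/q(\<tau> t|s)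
  on ((\<tau> t,y'),(t,y)), zero elsewhere: the factor q(t|s)/q(\<tau> t|s) converts f' into p' weights.
  States with q(t|s) = 0 need nothing since p vanishes there.\<close>

lemma nonneg_kernel_factors:
  fixes w :: "'z \<Rightarrow> 'x::finite \<Rightarrow> real"
  assumes "\<And>z x. 0 \<le> w z x"
  shows "\<exists>\<gamma> \<phi>. (\<forall>z. 0 \<le> \<gamma> z) \<and> (\<forall>z. is_dist (\<phi> z)) \<and> (\<forall>z x. w z x = \<gamma> z * \<phi> z x)"
proof -
  define \<gamma> where "\<gamma> z = (\<Sum>x\<in>UNIV. w z x)" for z
  define \<phi> where "\<phi> z = (if \<gamma> z = 0 then (\<lambda>x. if x = undefined then 1 else 0) else (\<lambda>x. w z x / \<gamma> z))"
    for z
  have \<gamma>_nonneg: "0 \<le> \<gamma> z" for z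
    unfolding \<gamma>_def using assms by (simp add: sum_nonneg)
  have "is_dist (\<phi> z)" for z
  proof (cases "\<gamma> z = 0")
    case True
    then show ?thesis by (simp add: \<phi>_def is_dist_def)
  next
    case False
    then show ?thesis using \<gamma>_nonneg[of z] assms
      by (simp add: \<phi>_def is_dist_def sum_divide_distrib[symmetric] \<gamma>_def[symmetric])
  qed
  moreover have "w z x = \<gamma> z * \<phi> z x" for z x
  proof (cases "\<gamma> z = 0")
    case True
    then have "w z x = 0"
      unfolding \<gamma>_def using sum_nonneg_eq_0_iff[of UNIV "w z"] assms by simp
    then show ?thesis using True by simp
  next
    case False
    then show ?thesis by (simp add: \<phi>_def)
  qed
  ultimately show ?thesis using \<gamma>_nonneg by blast
qed

lemma weighted_garblingI:
  fixes p :: "'s::finite \<Rightarrow> 'a \<Rightarrow> 's \<times> 'y::finite \<Rightarrow> real"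
    and p' :: "'s \<Rightarrow> 'a \<Rightarrow> 's \<times> 'y'::finite \<Rightarrow> real"
  assumes "\<And>s. \<exists>w. (\<forall>z' z. 0 \<le> w z' z) \<and> (\<forall>z a. p s a z = (\<Sum>z'\<in>UNIV. w z' z * p' s a z'))"
  shows "weighted_garbling p p'"
  unfolding weighted_garbling_def
proof
  fix s
  obtain w where w_nonneg: "\<And>z' z. 0 \<le> w z' z"
    and p_eq: "\<And>z a. p s a z = (\<Sum>z'\<in>UNIV. w z' z * p' s a z')"
    using assms by blast
  obtain \<gamma> \<phi> where "\<forall>z'. 0 \<le> \<gamma> z'" "\<forall>z'. is_dist (\<phi> z')" "\<forall>z' z. w z' z = \<gamma> z' * \<phi> z' z"
    using nonneg_kernel_factors[of w] w_nonneg by blast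
  moreover have "p s a z = (\<Sum>z'\<in>UNIV. \<gamma> z' * \<phi> z' z * p' s a z')" for z a
    using p_eq \<open>\<forall>z' z. w z' z = \<gamma> z' * \<phi> z' z\<close> by simp
  ultimately show "\<exists>\<gamma> \<phi>. (\<forall>z'. 0 \<le> \<gamma> z') \<and> (\<forall>z'. is_dist (\<phi> z')) \<and>
      (\<forall>z a. p s a z = (\<Sum>z'\<in>UNIV. \<gamma> z' * \<phi> z' z * p' s a z'))"
    by blast
qed

lemma joint_garbling_kernel:
  fixes q :: "'t::finite \<Rightarrow> real"
    and f :: "'t \<Rightarrow> 'a \<Rightarrow> 'y \<Rightarrow> real"
    and f' :: "'t \<Rightarrow> 'a \<Rightarrow> 'y'::finite \<Rightarrow> real"
    and \<tau> :: "'t \<Rightarrow> 't"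
  assumes q_nonneg: "\<And>t. 0 \<le> q t"
    and \<tau>_pos: "\<And>t. 0 < q t \<Longrightarrow> 0 < q (\<tau> t)"
    and \<gamma>_nonneg: "\<And>t y'. 0 < q t \<Longrightarrow> 0 \<le> \<gamma> t y'"
    and \<phi>_nonneg: "\<And>t y' y. 0 < q t \<Longrightarrow> 0 \<le> \<phi> t y' y"
    and f_eq: "\<And>t a y. 0 < q t \<Longrightarrow> f t a y = (\<Sum>y'\<in>UNIV. \<gamma> t y' * \<phi> t y' y * f' (\<tau> t) a y')"
  shows "\<exists>w. (\<forall>z' z. 0 \<le> w z' z) \<and> (\<forall>z a. (case z of (t, y) \<Rightarrow> f t a y * q t) =
    (\<Sum>z'\<in>UNIV. w z' z * (case z' of (t', y') \<Rightarrow> f' t' a y' * q t')))"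
proof -
  define w where "w = (\<lambda>(t', y') (t, y).
    if \<tau> t = t' \<and> 0 < q t then \<gamma> t y' * q t / q t' * \<phi> t y' y else 0)"
  have "0 \<le> w z' z" for z' z
    using q_nonneg \<gamma>_nonneg \<phi>_nonneg unfolding w_def
    by (auto split: prod.splits intro!: mult_nonneg_nonneg divide_nonneg_nonneg)
  moreover have "f t a y * q t = (\<Sum>z'\<in>UNIV. w z' (t, y) * (case z' of (t', y') \<Rightarrow> f' t' a y' * q t'))"
    for t y a
  proof (cases "0 < q t")
    case True
    have "(\<Sum>z'\<in>UNIV. w z' (t, y) * (case z' of (t', y') \<Rightarrow> f' t' a y' * q t'))
        = (\<Sum>t'\<in>UNIV. \<Sum>y'\<in>UNIV. w (t', y') (t, y) * (f' t' a y' * q t'))"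
      unfolding UNIV_Times_UNIV[symmetric] sum.cartesian_product by (simp add: case_prod_unfold)
    also have "\<dots> = (\<Sum>t'\<in>UNIV. if t' = \<tau> t
        then (\<Sum>y'\<in>UNIV. w (t', y') (t, y) * (f' t' a y' * q t')) else 0)"
      by (rule sum.cong) (auto simp: w_def)
    also have "\<dots> = (\<Sum>y'\<in>UNIV. q t * (\<gamma> t y' * \<phi> t y' y * f' (\<tau> t) a y'))"
      using True \<tau>_pos[OF True] by (simp add: w_def mult_ac)
    also have "\<dots> = q t * f t a y"
      using f_eq[OF True] by (simp add: sum_distrib_left)
    finally show ?thesis by (simp add: mult.commute)
  next
    case False
    then have "q t = 0" using q_nonneg[of t] by simp
    then show ?thesis using False by (simp add: w_def case_prod_unfold)
  qed
  ultimately show ?thesis by (auto split: prod.split)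
qed

theorem mainTheorem1:
  fixes q :: "'s::finite \<Rightarrow> 's \<Rightarrow> real"
    and f :: "'s \<Rightarrow> 's \<Rightarrow> 'a::finite \<Rightarrow> 'y::finite \<Rightarrow> real"
    and f' :: "'s \<Rightarrow> 's \<Rightarrow> 'a \<Rightarrow> 'y'::finite \<Rightarrow> real"
  assumes q_dist: "\<And>s. is_dist (q s)"
    and f_dist: "\<And>s t a. is_dist (f s t a)"
    and f'_dist: "\<And>s t a. is_dist (f' s t a)"
    and hyp: "\<And>s t. q s t > 0 \<Longrightarrow>
               \<exists>t'. q s t' > 0 \<and> more_WG_informative f' s t' f s t"
  shows "weighted_garbling (\<lambda>s a (t, y). f s t a y * q s t)
                           (\<lambda>s a (t', y'). f' s t' a y' * q s t')"
proof (rule weighted_garblingI)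
  fix s
  obtain \<tau> \<gamma> \<phi> where \<tau>: "\<And>t. 0 < q s t \<Longrightarrow> 0 < q s (\<tau> t) \<and> (\<forall>y'. 0 \<le> \<gamma> t y') \<and>
      (\<forall>y'. is_dist (\<phi> t y')) \<and>
      (\<forall>y a. f s t a y = (\<Sum>y'\<in>UNIV. \<gamma> t y' * \<phi> t y' y * f' s (\<tau> t) a y'))"
  proof -
    have "\<forall>t. \<exists>t' \<gamma> \<phi>. 0 < q s t \<longrightarrow> 0 < q s t' \<and> (\<forall>y'. 0 \<le> \<gamma> y') \<and>
        (\<forall>y'. is_dist (\<phi> y')) \<and> (\<forall>y a. f s t a y = (\<Sum>y'\<in>UNIV. \<gamma> y' * \<phi> y' y * f' s t' a y'))"
      using hyp[of s] unfolding more_WG_informative_def by blast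
    then show thesis
      unfolding choice_iff using that by blast
  qed
  show "\<exists>w. (\<forall>z' z. 0 \<le> w z' z) \<and> (\<forall>z a. (case z of (t, y) \<Rightarrow> f s t a y * q s t) =
      (\<Sum>z'\<in>UNIV. w z' z * (case z' of (t', y') \<Rightarrow> f' s t' a y' * q s t')))"
  proof (rule joint_garbling_kernel[where q = "q s" and f = "f s" and f' = "f' s" and \<tau> = \<tau>
        and \<gamma> = \<gamma> and \<phi> = \<phi>])
    show "0 \<le> q s t" for t
      using q_dist[of s] by (simp add: is_dist_def)
    show "0 \<le> \<phi> t y' y" if "0 < q s t" for t y' y
      using \<tau>[OF that] by (simp add: is_dist_def)
  qed (use \<tau> in blast)+
qed

end
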